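(* Let $\mathcal C\subseteq\mathbf F_q^n$ be a formally self-orthogonal linear $[n,k,d]$ code. Then for each $1\le i\le n$, either $\mathcal P_i=\{(c,0):c\in\mathcal P_{i-1}\}$ or $\mathcal F_{i-1}=\{(0,c):c\in\mathcal F_i\}$. Equivalently, $\dim\mathcal P_{i-1}=\dim\mathcal P_i$ or $\dim\mathcal F_{i-1}=\dim\mathcal F_i$.
   Context: The coordinate order is fixed. Define $\mathcal P_0=\mathcal F_n=0$, $\mathcal P_n=\mathcal F_0=\mathcal C$, and for $1\le i\le n-1$, $\mathcal P_i=\{(c_1,\dots,c_i):(c_1,\dots,c_i,0,\dots,0)\in\mathcal C\}\subseteq\mathbf F_q^i$ and $\mathcal F_i=\{(c_{i+1},\dots,c_n):(0,\dots,0,c_{i+1},\dots,c_n)\in\mathcal C\}\subseteq\mathbf F_q^{n-i}$. A code $\mathcal C$ is formally self-orthogonal if there is an $n$-tuple $\mathbf x$ of nonzero elements of $\mathbf F_q$ with $\mathcal C\subseteq\mathbf x*\mathcal C^\perp$, where $*$ is coordinate-wise multiplication and $\mathcal C^\perp$ is the dual code under the standard inner product. *)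

theory Defs
  imports Main
begin

definition vecs :: "nat \<Rightarrow> 'a list set" where
  "vecs m = {v. length v = m}"

definition zero_vec :: "nat \<Rightarrow> 'a::zero list" where
  "zero_vec m = replicate m 0"

definition vadd :: "'a::plus list \<Rightarrow> 'a list \<Rightarrow> 'a list" where
  "vadd u v = map2 (+) u v"

definition smult_vec :: "'a::times \<Rightarrow> 'a list \<Rightarrow> 'a list" where
  "smult_vec a v = map ((*) a) v"

definition cmult :: "'a::times list \<Rightarrow> 'a list \<Rightarrow> 'a list" where
  "cmult x y = map2 (*) x y"

definition dot :: "'a::comm_semiring_1 list \<Rightarrow> 'a list \<Rightarrow> 'a" where
  "dot u v = sum_list (map2 (*) u v)"

definition linear_code :: "nat \<Rightarrow> 'a::field list set \<Rightarrow> bool" where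
  "linear_code n C \<longleftrightarrow> C \<subseteq> vecs n \<and> zero_vec n \<in> C \<and>
     (\<forall>u\<in>C. \<forall>v\<in>C. vadd u v \<in> C) \<and> (\<forall>a. \<forall>v\<in>C. smult_vec a v \<in> C)"

definition hamming_wt :: "'a::zero list \<Rightarrow> nat" where
  "hamming_wt v = length (filter (\<lambda>x. x \<noteq> 0) v)"

text \<open>[n,k,d] linear code over the finite field 'a (q = card UNIV):
  dimension k (equivalently |C| = q^k) and minimum distance d
  (minimum weight of a nonzero codeword; only required when C is nonzero).\<close>
definition nkd_code :: "nat \<Rightarrow> nat \<Rightarrow> nat \<Rightarrow> 'a::{finite,field} list set \<Rightarrow> bool" where
  "nkd_code n k d C \<longleftrightarrow> linear_code n C \<and> card C = card (UNIV :: 'a set) ^ k \<and>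
     (k > 0 \<longrightarrow> d = Min (hamming_wt ` (C - {zero_vec n})))"

definition dual_code :: "nat \<Rightarrow> 'a::field list set \<Rightarrow> 'a list set" where
  "dual_code n C = {y \<in> vecs n. \<forall>c\<in>C. dot c y = 0}"

definition formally_self_orthogonal :: "nat \<Rightarrow> 'a::field list set \<Rightarrow> bool" where
  "formally_self_orthogonal n C \<longleftrightarrow>
     (\<exists>x. length x = n \<and> (\<forall>j<n. x ! j \<noteq> 0) \<and> C \<subseteq> cmult x ` dual_code n C)"

text \<open>Shortened codes P_i (prefixes) and F_i (suffixes), as in the paper:
  P_0 = F_n = 0, P_n = F_0 = C.\<close>
definition Pcode :: "nat \<Rightarrow> 'a::zero list set \<Rightarrow> nat \<Rightarrow> 'a list set" where
  "Pcode n C i = (if i = 0 then {zero_vec 0} else if i = n then C else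
     {take i c | c. c \<in> C \<and> drop i c = zero_vec (n - i)})"

definition Fcode :: "nat \<Rightarrow> 'a::zero list set \<Rightarrow> nat \<Rightarrow> 'a list set" where
  "Fcode n C i = (if i = n then {zero_vec 0} else if i = 0 then C else
     {drop i c | c. c \<in> C \<and> take i c = zero_vec i})"

end

(* If neither shortening step at coordinate i is trivial, there are codewords c, c' with
   c_i, c'_i nonzero, c vanishing after coordinate i and c' vanishing before it.
   Formal self-orthogonality writes c = x * y with y in the dual code and x nowhere zero,
   so y has the support of c, and then 0 = <c', y> = c'_i y_i, a contradiction. *)

theory Submission
  imports Defs
begin

lemma take_eq_zero_vec_iff:
  assumes "j \<le> length c"
  shows "take j c = zero_vec j \<longleftrightarrow> (\<forall>k<j. c ! k = 0)"
  using assms by (auto simp: zero_vec_def list_eq_iff_nth_eq)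

lemma drop_eq_zero_vec_iff:
  "drop j c = zero_vec (length c - j) \<longleftrightarrow> (\<forall>k. j \<le> k \<and> k < length c \<longrightarrow> c ! k = 0)"
  by (auto simp: zero_vec_def list_eq_iff_nth_eq) (metis le_add_diff_inverse less_diff_conv add.commute)

lemma dot_eq_nth_mult_if_supports_meet_at:
  fixes u v :: "'a::comm_semiring_1 list"
  assumes "length u = n" "length v = n" "j < n"
    and "\<forall>k<n. k \<noteq> j \<longrightarrow> u ! k = 0 \<or> v ! k = 0"
  shows "dot u v = u ! j * v ! j"
proof -
  have "dot u v = (\<Sum>k<n. u ! k * v ! k)"
    using assms(1,2) by (simp add: dot_def sum_list_sum_nth atLeast0LessThan)
  also have "\<dots> = u ! j * v ! j"
    using assms(3,4) by (subst sum.mono_neutral_right[where S = "{j}"]) auto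
  finally show ?thesis .
qed

lemma Pcode_eq_take:
  assumes "linear_code n C" "i \<le> n"
  shows "Pcode n C i = {take i c | c. c \<in> C \<and> drop i c = zero_vec (n - i)}"
proof -
  have C: "C \<subseteq> vecs n" "zero_vec n \<in> C" using assms(1) by (auto simp: linear_code_def)
  consider "i = 0" | "i = n" "i \<noteq> 0" | "i \<noteq> 0" "i \<noteq> n" by blast
  then show ?thesis
  proof cases
    case 1
    have "{take i c | c. c \<in> C \<and> drop i c = zero_vec (n - i)} = {[]}"
      using 1 C(2) by auto
    then show ?thesis using 1 by (simp add: Pcode_def zero_vec_def)
  next
    case 2
    have "{take i c | c. c \<in> C \<and> drop i c = zero_vec (n - i)} = C"
      using 2 C(1) by (force simp: vecs_def zero_vec_def)
    then show ?thesis using 2 by (simp add: Pcode_def)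
  qed (simp add: Pcode_def)
qed

lemma Fcode_eq_drop:
  assumes "linear_code n C" "i \<le> n"
  shows "Fcode n C i = {drop i c | c. c \<in> C \<and> take i c = zero_vec i}"
proof -
  have C: "C \<subseteq> vecs n" "zero_vec n \<in> C" using assms(1) by (auto simp: linear_code_def)
  consider "i = n" | "i = 0" "i \<noteq> n" | "i \<noteq> 0" "i \<noteq> n" by blast
  then show ?thesis
  proof cases
    case 1
    have "{drop i c | c. c \<in> C \<and> take i c = zero_vec i} = {[]}"
      using 1 C by (force simp: vecs_def zero_vec_def)
    then show ?thesis using 1 by (simp add: Fcode_def zero_vec_def)
  next
    case 2
    have "{drop i c | c. c \<in> C \<and> take i c = zero_vec i} = C"
      using 2 by (simp add: zero_vec_def)
    then show ?thesis using 2 by (simp add: Fcode_def)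
  qed (simp add: Fcode_def)
qed

lemma Pcode_Suc_eq_append_zero:
  assumes C: "linear_code n C" and "j < n"
    and vanish: "\<forall>c\<in>C. drop (Suc j) c = zero_vec (n - Suc j) \<longrightarrow> c ! j = 0"
  shows "Pcode n C (Suc j) = {p @ [0] | p. p \<in> Pcode n C j}"
proof -
  have drop_j: "drop j c = zero_vec (n - j) \<longleftrightarrow> c ! j = 0 \<and> drop (Suc j) c = zero_vec (n - Suc j)"
    and take_Suc_j: "take (Suc j) c = take j c @ [c ! j]" if "c \<in> C" for c
  proof -
    have "j < length c" using that C \<open>j < n\<close> by (auto simp: linear_code_def vecs_def)
    then have "drop j c = c ! j # drop (Suc j) c" by (simp add: Cons_nth_drop_Suc)
    moreover have "zero_vec (n - j) = 0 # zero_vec (n - Suc j)"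
      using \<open>j < n\<close> by (simp add: zero_vec_def flip: Suc_diff_Suc)
    ultimately show "drop j c = zero_vec (n - j) \<longleftrightarrow> c ! j = 0 \<and> drop (Suc j) c = zero_vec (n - Suc j)"
      by (metis list.inject)
    show "take (Suc j) c = take j c @ [c ! j]"
      using \<open>j < length c\<close> by (rule take_Suc_conv_app_nth)
  qed
  have "j \<le> n" "Suc j \<le> n" using \<open>j < n\<close> by simp_all
  show ?thesis
    unfolding Pcode_eq_take[OF C \<open>j \<le> n\<close>] Pcode_eq_take[OF C \<open>Suc j \<le> n\<close>]
  proof (intro set_eqI iffI)
    fix p assume "p \<in> {take (Suc j) c | c. c \<in> C \<and> drop (Suc j) c = zero_vec (n - Suc j)}"
    then obtain c where "c \<in> C" "drop (Suc j) c = zero_vec (n - Suc j)" "p = take (Suc j) c"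
      by blast
    then have "drop j c = zero_vec (n - j)" "p = take j c @ [0]"
      using vanish drop_j take_Suc_j by auto
    with \<open>c \<in> C\<close> show "p \<in> {p @ [0] | p. p \<in> {take j c | c. c \<in> C \<and> drop j c = zero_vec (n - j)}}"
      by blast
  next
    fix p assume "p \<in> {p @ [0] | p. p \<in> {take j c | c. c \<in> C \<and> drop j c = zero_vec (n - j)}}"
    then obtain c where "c \<in> C" "drop j c = zero_vec (n - j)" "p = take j c @ [0]"
      by blast
    then have "drop (Suc j) c = zero_vec (n - Suc j)" "p = take (Suc j) c"
      using drop_j take_Suc_j by auto
    with \<open>c \<in> C\<close> show "p \<in> {take (Suc j) c | c. c \<in> C \<and> drop (Suc j) c = zero_vec (n - Suc j)}"
      by blast
  qed
qed

lemma Fcode_eq_Cons_zero: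
  assumes C: "linear_code n C" and "j < n"
    and vanish: "\<forall>c\<in>C. take j c = zero_vec j \<longrightarrow> c ! j = 0"
  shows "Fcode n C j = {0 # p | p. p \<in> Fcode n C (Suc j)}"
proof -
  have take_Suc_j: "take (Suc j) c = zero_vec (Suc j) \<longleftrightarrow> take j c = zero_vec j \<and> c ! j = 0"
    and drop_j: "drop j c = c ! j # drop (Suc j) c" if "c \<in> C" for c
  proof -
    have "j < length c" using that C \<open>j < n\<close> by (auto simp: linear_code_def vecs_def)
    then have "take (Suc j) c = take j c @ [c ! j]" by (rule take_Suc_conv_app_nth)
    moreover have "zero_vec (Suc j) = zero_vec j @ [0]"
      by (simp add: zero_vec_def replicate_append_same)
    ultimately show "take (Suc j) c = zero_vec (Suc j) \<longleftrightarrow> take j c = zero_vec j \<and> c ! j = 0"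
      by (metis append1_eq_conv)
    show "drop j c = c ! j # drop (Suc j) c"
      using \<open>j < length c\<close> by (simp add: Cons_nth_drop_Suc)
  qed
  have "j \<le> n" "Suc j \<le> n" using \<open>j < n\<close> by simp_all
  show ?thesis
    unfolding Fcode_eq_drop[OF C \<open>j \<le> n\<close>] Fcode_eq_drop[OF C \<open>Suc j \<le> n\<close>]
  proof (intro set_eqI iffI)
    fix p assume "p \<in> {drop j c | c. c \<in> C \<and> take j c = zero_vec j}"
    then obtain c where "c \<in> C" "take j c = zero_vec j" "p = drop j c"
      by blast
    then have "take (Suc j) c = zero_vec (Suc j)" "p = 0 # drop (Suc j) c"
      using vanish take_Suc_j[OF \<open>c \<in> C\<close>] drop_j[OF \<open>c \<in> C\<close>] by simp_all
    with \<open>c \<in> C\<close> show "p \<in> {0 # p | p. p \<in> {drop (Suc j) c | c. c \<in> C \<and> take (Suc j) c = zero_vec (Suc j)}}"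
      by blast
  next
    fix p assume "p \<in> {0 # p | p. p \<in> {drop (Suc j) c | c. c \<in> C \<and> take (Suc j) c = zero_vec (Suc j)}}"
    then obtain c where "c \<in> C" "take (Suc j) c = zero_vec (Suc j)" "p = 0 # drop (Suc j) c"
      by blast
    then have "take j c = zero_vec j" "p = drop j c"
      using take_Suc_j[OF \<open>c \<in> C\<close>] drop_j[OF \<open>c \<in> C\<close>] by simp_all
    with \<open>c \<in> C\<close> show "p \<in> {drop j c | c. c \<in> C \<and> take j c = zero_vec j}"
      by blast
  qed
qed

lemma formally_self_orthogonal_prefix_suffix_nth_zero:
  assumes fso: "formally_self_orthogonal n C" and C: "C \<subseteq> vecs n"
    and "c \<in> C" "c' \<in> C" "j < n"
    and c_prefix: "drop (Suc j) c = zero_vec (n - Suc j)" and c'_suffix: "take j c' = zero_vec j"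
  shows "c ! j = 0 \<or> c' ! j = 0"
proof -
  have "length c = n" "length c' = n" using C \<open>c \<in> C\<close> \<open>c' \<in> C\<close> by (auto simp: vecs_def)
  then have c_vanish: "\<forall>k. j < k \<and> k < n \<longrightarrow> c ! k = 0" and c'_vanish: "\<forall>k<j. c' ! k = 0"
    using c_prefix c'_suffix \<open>j < n\<close> by (auto simp: drop_eq_zero_vec_iff take_eq_zero_vec_iff)
  obtain x where x: "length x = n" "\<forall>k<n. x ! k \<noteq> 0" "C \<subseteq> cmult x ` dual_code n C"
    using fso by (auto simp: formally_self_orthogonal_def)
  then obtain y where y: "y \<in> dual_code n C" "c = cmult x y"
    using \<open>c \<in> C\<close> by auto
  have "length y = n" using y(1) by (simp add: dual_code_def vecs_def)
  have c_nth: "c ! k = x ! k * y ! k" if "k < n" for k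
    using that x(1) \<open>length y = n\<close> y(2) by (simp add: cmult_def)
  have "c' ! k = 0 \<or> y ! k = 0" if "k < n" "k \<noteq> j" for k
  proof (cases "k < j")
    case True
    then show ?thesis using c'_vanish by simp
  next
    case False
    then have "x ! k * y ! k = 0" using that c_vanish c_nth by simp
    then show ?thesis using x(2) \<open>k < n\<close> by simp
  qed
  then have "dot c' y = c' ! j * y ! j"
    using \<open>length c' = n\<close> \<open>length y = n\<close> \<open>j < n\<close> by (intro dot_eq_nth_mult_if_supports_meet_at) auto
  moreover have "dot c' y = 0" using y(1) \<open>c' \<in> C\<close> by (simp add: dual_code_def)
  ultimately show ?thesis using c_nth \<open>j < n\<close> by auto
qed

theorem proposition4p2:
  fixes C :: "'a::{finite,field} list set" and n k d :: nat
  assumes "nkd_code n k d C"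
    and "formally_self_orthogonal n C"
    and "1 \<le> i" and "i \<le> n"
  shows "Pcode n C i = {c @ [0] | c. c \<in> Pcode n C (i - 1)}
         \<or> Fcode n C (i - 1) = {0 # c | c. c \<in> Fcode n C i}"
proof -
  obtain j where i_Suc: "i = Suc j" and "j < n" using assms(3,4) by (cases i) auto
  have C: "linear_code n C" using assms(1) by (simp add: nkd_code_def)
  then have "C \<subseteq> vecs n" by (simp add: linear_code_def)
  then have "c ! j = 0 \<or> c' ! j = 0"
    if "c \<in> C" "drop (Suc j) c = zero_vec (n - Suc j)" "c' \<in> C" "take j c' = zero_vec j" for c c'
    using formally_self_orthogonal_prefix_suffix_nth_zero[OF assms(2)] \<open>j < n\<close> that by blast
  then have "(\<forall>c\<in>C. drop (Suc j) c = zero_vec (n - Suc j) \<longrightarrow> c ! j = 0)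
      \<or> (\<forall>c\<in>C. take j c = zero_vec j \<longrightarrow> c ! j = 0)"
    by blast
  then show ?thesis
  proof
    assume "\<forall>c\<in>C. drop (Suc j) c = zero_vec (n - Suc j) \<longrightarrow> c ! j = 0"
    then show ?thesis using Pcode_Suc_eq_append_zero[OF C \<open>j < n\<close>] i_Suc by simp
  next
    assume "\<forall>c\<in>C. take j c = zero_vec j \<longrightarrow> c ! j = 0"
    then show ?thesis using Fcode_eq_Cons_zero[OF C \<open>j < n\<close>] i_Suc by simp
  qed
qed

end
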